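(* Let $B>0$, $C>0$ and $\gamma\in[0,1]$ be fixed. For $\alpha\in[0,1/2]$ define $$b_{a}(\alpha)=\frac{\left(-2\alpha^4+5\alpha^3-4\alpha^2+\alpha\right)\gamma+4\alpha^4-9\alpha^3+4\alpha^2}{2\alpha^3-4\alpha^2+1},$$ $$b_{h}(\alpha)=\frac{\left(2\alpha^4-5\alpha^3+4\alpha^2-\alpha\right)\gamma-4\alpha^4+10\alpha^3-6\alpha^2-\alpha+1}{2\alpha^3-4\alpha^2+1},$$ and set $B_{\mathrm{attacker}}(\alpha)=B\,b_a(\alpha)$, $B_{\mathrm{honest}}(\alpha)=B\,b_h(\alpha)$. Let $f(\alpha)=\frac{\alpha\,B_{\mathrm{honest}}(\alpha)}{(1-\alpha)\left(B_{\mathrm{attacker}}(\alpha)+B_{\mathrm{honest}}(\alpha)\right)}$ for $\alpha\in[0,1/2]$, and let $M_{\max}=\frac{B}{C}\max_{\alpha\in[0,1/2]}f(\alpha)$. For $M>0$ and $H>0$ let $\alpha=\frac{M}{H+M}$ and define $$\mathcal{U}^S(H)=B\,\frac{B_{\mathrm{honest}}(\alpha)}{(1-\alpha)B}\cdot\frac{B}{\left(B_{\mathrm{attacker}}(\alpha)+B_{\mathrm{honest}}(\alpha)\right)(H+M)}-C.$$ Call $H^*$ an equilibrium if $H^*>M$ and $\mathcal{U}^S(H^* )=0$. Then for every $M$ with $0<M<M_{\max}$ there are exactly two equilibria $H^*_1<H^*_2$, where $H^*_2$ is stable and $H^*_1$ is unstable.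
   Context: Model of selfish mining (in the sense of Eyal and Sirer) with elastic hash supply: $B$ is the expected block reward, $C$ the cost per unit hash rate per block interval, $H$ the honest miners' total hash rate, $M$ the attacking pool's hash rate, $\gamma$ the fraction of honest miners mining on the attacker's block during a tie, and $\mathcal{U}^S(H)$ the honest miners' per-hash-rate profit under attack. Honest miners enter when profit is positive and leave when it is negative. An equilibrium $H^*$ is stable if there is $\varepsilon>0$ such that $\mathcal{U}^S(H)>0$ for $H\in(H^*-\varepsilon,H^* )$ and $\mathcal{U}^S(H)<0$ for $H\in(H^*,H^*+\varepsilon)$ (so perturbations are driven back to $H^*$); it is unstable if instead $\mathcal{U}^S(H)<0$ for $H\in(H^*-\varepsilon,H^* )$ and $\mathcal{U}^S(H)>0$ for $H\in(H^*,H^*+\varepsilon)$. *)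

theory Defs
  imports Complex_Main
begin

text \<open>Normalized attacker / honest block-reward shares (per unit B) for attacker fraction alpha.\<close>
definition b_a :: "real \<Rightarrow> real \<Rightarrow> real" where
  "b_a \<gamma> \<alpha> =
     ((-2*\<alpha>^4 + 5*\<alpha>^3 - 4*\<alpha>^2 + \<alpha>) * \<gamma> + 4*\<alpha>^4 - 9*\<alpha>^3 + 4*\<alpha>^2)
     / (2*\<alpha>^3 - 4*\<alpha>^2 + 1)"

definition b_h :: "real \<Rightarrow> real \<Rightarrow> real" where
  "b_h \<gamma> \<alpha> =
     ((2*\<alpha>^4 - 5*\<alpha>^3 + 4*\<alpha>^2 - \<alpha>) * \<gamma> - 4*\<alpha>^4 + 10*\<alpha>^3 - 6*\<alpha>^2 - \<alpha> + 1)
     / (2*\<alpha>^3 - 4*\<alpha>^2 + 1)"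

definition B_attacker :: "real \<Rightarrow> real \<Rightarrow> real \<Rightarrow> real" where
  "B_attacker B \<gamma> \<alpha> = B * b_a \<gamma> \<alpha>"

definition B_honest :: "real \<Rightarrow> real \<Rightarrow> real \<Rightarrow> real" where
  "B_honest B \<gamma> \<alpha> = B * b_h \<gamma> \<alpha>"

definition f_sm :: "real \<Rightarrow> real \<Rightarrow> real \<Rightarrow> real" where
  "f_sm B \<gamma> \<alpha> = \<alpha> * B_honest B \<gamma> \<alpha>
       / ((1 - \<alpha>) * (B_attacker B \<gamma> \<alpha> + B_honest B \<gamma> \<alpha>))"

text \<open>M_max = (B/C) * max of f over [0,1/2] (the maximum exists by continuity; written as Sup).\<close>
definition M_max :: "real \<Rightarrow> real \<Rightarrow> real \<Rightarrow> real" where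
  "M_max B C \<gamma> = B / C * Sup (f_sm B \<gamma> ` {0..1/2})"

definition U_S :: "real \<Rightarrow> real \<Rightarrow> real \<Rightarrow> real \<Rightarrow> real \<Rightarrow> real" where
  "U_S B C \<gamma> M H =
     (let \<alpha> = M / (H + M) in
       B * (B_honest B \<gamma> \<alpha> / ((1 - \<alpha>) * B))
         * (B / ((B_attacker B \<gamma> \<alpha> + B_honest B \<gamma> \<alpha>) * (H + M))) - C)"

definition equilibrium :: "(real \<Rightarrow> real) \<Rightarrow> real \<Rightarrow> real \<Rightarrow> bool" where
  "equilibrium U M Hs \<longleftrightarrow> Hs > M \<and> U Hs = 0"

definition stable_eq :: "(real \<Rightarrow> real) \<Rightarrow> real \<Rightarrow> bool" where
  "stable_eq U Hs \<longleftrightarrow> (\<exists>\<epsilon>>0. (\<forall>H\<in>{Hs-\<epsilon><..<Hs}. U H > 0) \<and> (\<forall>H\<in>{Hs<..<Hs+\<epsilon>}. U H < 0))"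

definition unstable_eq :: "(real \<Rightarrow> real) \<Rightarrow> real \<Rightarrow> bool" where
  "unstable_eq U Hs \<longleftrightarrow> (\<exists>\<epsilon>>0. (\<forall>H\<in>{Hs-\<epsilon><..<Hs}. U H < 0) \<and> (\<forall>H\<in>{Hs<..<Hs+\<epsilon>}. U H > 0))"

end

theory Submission
  imports Defs
begin

text \<open>
  With \<open>D = 2\<alpha>\<^sup>3 - 4\<alpha>\<^sup>2 + 1\<close> the common denominator of \<open>b\<^sub>a\<close> and \<open>b\<^sub>h\<close>, one has
  \<open>b\<^sub>h = (1 - 2\<alpha>)Q/D\<close> and \<open>b\<^sub>a + b\<^sub>h = R/D\<close> for cubics \<open>Q\<close> and \<open>R\<close>, so on \<open>[0, 1/2]\<close> the
  function \<open>f\<close> is the rational function \<open>\<alpha>(1 - 2\<alpha>)Q/((1 - \<alpha>)R)\<close>, which vanishes at both ends.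
  Its derivative is \<open>P/((1 - \<alpha>)R)\<^sup>2\<close> for a polynomial \<open>P\<close> with \<open>P(0) > 0 > P(1/2)\<close> whose own
  derivative is \<open>\<alpha> - 1/2\<close> times a polynomial positive on \<open>[0, 1/2]\<close>; so \<open>P\<close> changes sign once
  and \<open>f\<close> is unimodal. For \<open>H > M\<close> the profit is \<open>\<U>\<^sup>S(H) = (B/M)(f(\<alpha>) - CM/B)\<close> with
  \<open>\<alpha> = M/(H + M)\<close> decreasing from \<open>1/2\<close> to \<open>0\<close>, and \<open>M < M\<^sub>m\<^sub>a\<^sub>x\<close> says that the level
  \<open>CM/B\<close> lies strictly between \<open>0\<close> and the peak of \<open>f\<close>. The level is therefore hit exactly
  twice, and \<open>\<U>\<^sup>S\<close> is negative, positive and negative again on the three resulting intervals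
  of \<open>H\<close>: the larger equilibrium is stable and the smaller one unstable.
\<close>

lemma strict_mono_on_if_DERIV_pos:
  fixes f f' :: "real \<Rightarrow> real"
  assumes "\<And>x. a \<le> x \<Longrightarrow> x \<le> b \<Longrightarrow> (f has_real_derivative f' x) (at x)"
    and "\<And>x. a < x \<Longrightarrow> x < b \<Longrightarrow> 0 < f' x"
  shows "strict_mono_on {a..b} f"
proof (rule strict_mono_onI)
  fix r s assume rs: "r \<in> {a..b}" "s \<in> {a..b}" "r < s"
  show "f r < f s"
  proof (rule DERIV_pos_imp_increasing_open[OF \<open>r < s\<close>])
    show "\<exists>y. DERIV f x :> y \<and> 0 < y" if "r < x" "x < s" for x
      using assms rs that by (intro exI[of _ "f' x"]) auto
    show "continuous_on {r..s} f"
      using assms(1) rs by (intro DERIV_atLeastAtMost_imp_continuous_on) (meson atLeastAtMost_iff order_trans)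
  qed
qed

lemma strict_antimono_on_if_DERIV_neg:
  fixes f f' :: "real \<Rightarrow> real"
  assumes "\<And>x. a \<le> x \<Longrightarrow> x \<le> b \<Longrightarrow> (f has_real_derivative f' x) (at x)"
    and "\<And>x. a < x \<Longrightarrow> x < b \<Longrightarrow> f' x < 0"
  shows "strict_antimono_on {a..b} f"
proof (rule monotone_onI)
  fix r s assume rs: "r \<in> {a..b}" "s \<in> {a..b}" "r < s"
  show "f s < f r"
  proof (rule DERIV_neg_imp_decreasing_open[OF \<open>r < s\<close>])
    show "\<exists>y. DERIV f x :> y \<and> y < 0" if "r < x" "x < s" for x
      using assms rs that by (intro exI[of _ "f' x"]) auto
    show "continuous_on {r..s} f"
      using assms(1) rs by (intro DERIV_atLeastAtMost_imp_continuous_on) (meson atLeastAtMost_iff order_trans)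
  qed
qed

lemma unimodal_if_DERIV_sign_decreasing:
  fixes g P w :: "real \<Rightarrow> real"
  assumes "a < b"
    and g': "\<And>x. a \<le> x \<Longrightarrow> x \<le> b \<Longrightarrow> (g has_real_derivative P x / w x) (at x)"
    and w: "\<And>x. a \<le> x \<Longrightarrow> x \<le> b \<Longrightarrow> 0 < w x"
    and P: "continuous_on {a..b} P" "strict_antimono_on {a..b} P" "0 < P a" "P b < 0"
  obtains m where "a < m" "m < b" "strict_mono_on {a..m} g" "strict_antimono_on {m..b} g"
proof -
  obtain m where m: "a \<le> m" "m \<le> b" "P m = 0"
    using IVT2'[of P b 0 a] P \<open>a < b\<close> by auto
  have "m \<noteq> a" "m \<noteq> b" using m P by auto
  with m have m_between: "a < m" "m < b" by auto
  have "0 < P x" if "a \<le> x" "x < m" for x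
    using monotone_onD[OF P(2), of x m] that m by auto
  then have "strict_mono_on {a..m} g"
    using g' w m by (intro strict_mono_on_if_DERIV_pos[where f'="\<lambda>x. P x / w x"]) auto
  moreover have "P x < 0" if "m < x" "x \<le> b" for x
    using monotone_onD[OF P(2), of m x] that m by auto
  then have "strict_antimono_on {m..b} g"
    using g' w m
    by (intro strict_antimono_on_if_DERIV_neg[where f'="\<lambda>x. P x / w x"]) (auto simp: divide_neg_pos)
  ultimately show thesis using that m_between by blast
qed

lemma unimodal_le_peak:
  fixes g :: "real \<Rightarrow> real"
  assumes "strict_mono_on {a..m} g" "strict_antimono_on {m..b} g" "a \<le> x" "x \<le> b"
  shows "g x \<le> g m"
  using assms monotone_onD[OF assms(1), of x m] monotone_onD[OF assms(2), of m x]
  by (cases x m rule: linorder_cases) auto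

lemma unimodal_level_set:
  fixes g :: "real \<Rightarrow> real"
  assumes "continuous_on {a..b} g" "a \<le> m" "m \<le> b"
    and inc: "strict_mono_on {a..m} g" and dec: "strict_antimono_on {m..b} g"
    and "g a < c" "g b < c" "c < g m"
  obtains x1 x2 where "a < x1" "x1 < x2" "x2 < b" "g x1 = c" "g x2 = c"
    "\<And>x. x1 < x \<Longrightarrow> x < x2 \<Longrightarrow> c < g x"
    "\<And>x. a \<le> x \<Longrightarrow> x < x1 \<Longrightarrow> g x < c"
    "\<And>x. x2 < x \<Longrightarrow> x \<le> b \<Longrightarrow> g x < c"
proof -
  obtain x1 where x1: "a \<le> x1" "x1 \<le> m" "g x1 = c"
    using IVT'[of g a c m] assms continuous_on_subset[OF assms(1), of "{a..m}"] by auto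
  obtain x2 where x2: "m \<le> x2" "x2 \<le> b" "g x2 = c"
    using IVT2'[of g b c m] assms continuous_on_subset[OF assms(1), of "{m..b}"] by auto
  have "x1 \<noteq> a" "x1 \<noteq> m" "x2 \<noteq> m" "x2 \<noteq> b" using x1 x2 assms by auto
  with x1 x2 have between: "a < x1" "x1 < m" "m < x2" "x2 < b" by auto
  have mid: "c < g x" if "x1 < x" "x < x2" for x
  proof (cases "x \<le> m")
    case True then show ?thesis using monotone_onD[OF inc, of x1 x] that x1 between by auto
  next
    case False then show ?thesis using monotone_onD[OF dec, of x x2] that x2 between by auto
  qed
  have low: "g x < c" if "a \<le> x" "x < x1" for x
    using monotone_onD[OF inc, of x x1] that x1 between by auto
  have high: "g x < c" if "x2 < x" "x \<le> b" for x
    using monotone_onD[OF dec, of x2 x] that x2 between by auto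
  show thesis
    using between x1(3) x2(3) mid low high by (intro that[of x1 x2]) auto
qed

lemma equilibria_of_sign_pattern:
  fixes U :: "real \<Rightarrow> real"
  assumes "M < H1" "H1 < H2" "U H1 = 0" "U H2 = 0"
    and neg_low: "\<And>H. M < H \<Longrightarrow> H < H1 \<Longrightarrow> U H < 0"
    and pos_mid: "\<And>H. H1 < H \<Longrightarrow> H < H2 \<Longrightarrow> 0 < U H"
    and neg_high: "\<And>H. H2 < H \<Longrightarrow> U H < 0"
  shows "{H. equilibrium U M H} = {H1, H2}" "stable_eq U H2" "unstable_eq U H1"
proof -
  have "H = H1 \<or> H = H2" if "M < H" "U H = 0" for H
    using that neg_low[of H] pos_mid[of H] neg_high[of H] by fastforce
  then show "{H. equilibrium U M H} = {H1, H2}"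
    using assms(1-4) by (auto simp: equilibrium_def)
  show "stable_eq U H2"
    unfolding stable_eq_def using assms(2) pos_mid neg_high
    by (intro exI[of _ "H2 - H1"]) auto
  show "unstable_eq U H1"
    unfolding unstable_eq_def using assms(1,2) neg_low pos_mid
    by (intro exI[of _ "min (H1 - M) (H2 - H1)"]) auto
qed

lemma equilibria_of_share_sign_pattern:
  fixes U g :: "real \<Rightarrow> real"
  assumes "0 < M" "0 < \<kappa>"
    and U: "\<And>H. M < H \<Longrightarrow> U H = \<kappa> * (g (M / (H + M)) - c)"
    and x: "0 < x1" "x1 < x2" "x2 < 1/2" "g x1 = c" "g x2 = c"
    and pos_mid: "\<And>x. x1 < x \<Longrightarrow> x < x2 \<Longrightarrow> c < g x"
    and neg_low: "\<And>x. 0 < x \<Longrightarrow> x < x1 \<Longrightarrow> g x < c"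
    and neg_high: "\<And>x. x2 < x \<Longrightarrow> x < 1/2 \<Longrightarrow> g x < c"
  shows "{H. equilibrium U M H} = {M/x2 - M, M/x1 - M}"
    "stable_eq U (M/x1 - M)" "unstable_eq U (M/x2 - M)"
proof -
  define \<alpha> where "\<alpha> H = M / (H + M)" for H
  have share_range: "0 < \<alpha> H" "\<alpha> H < 1/2" if "M < H" for H
    using that \<open>0 < M\<close> by (auto simp: \<alpha>_def field_simps)
  have share_inverse: "\<alpha> (M/x - M) = x" if "0 < x" for x
    using that \<open>0 < M\<close> by (simp add: \<alpha>_def)
  have share_less: "\<alpha> H < x \<longleftrightarrow> M/x - M < H" "x < \<alpha> H \<longleftrightarrow> H < M/x - M"
    if "M < H" "0 < x" for H x
    using that \<open>0 < M\<close> by (auto simp: \<alpha>_def field_simps)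
  have U_sign: "0 < U H \<longleftrightarrow> c < g (\<alpha> H)" "U H < 0 \<longleftrightarrow> g (\<alpha> H) < c" if "M < H" for H
    using U[OF that] \<open>0 < \<kappa>\<close> by (auto simp: \<alpha>_def zero_less_mult_iff mult_less_0_iff)
  have H_order: "M < M/x2 - M" "M/x2 - M < M/x1 - M"
    using x \<open>0 < M\<close> by (simp_all add: field_simps)
  have U_zero: "U (M/x2 - M) = 0" "U (M/x1 - M) = 0"
    using H_order U x share_inverse by (simp_all add: \<alpha>_def)
  have U_neg_low: "U H < 0" if "M < H" "H < M/x2 - M" for H
    using that share_range[OF that(1)] share_less[OF that(1)] x neg_high U_sign[OF that(1)] by auto
  have U_pos_mid: "0 < U H" if "M/x2 - M < H" "H < M/x1 - M" for H
  proof -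
    have "M < H" using that H_order by linarith
    then show ?thesis
      using that share_less[OF \<open>M < H\<close>] x pos_mid U_sign[OF \<open>M < H\<close>] by auto
  qed
  have U_neg_high: "U H < 0" if "M/x1 - M < H" for H
  proof -
    have "M < H" using that H_order by linarith
    then show ?thesis
      using that share_range[OF \<open>M < H\<close>] share_less[OF \<open>M < H\<close>] x neg_low U_sign[OF \<open>M < H\<close>]
      by auto
  qed
  show "{H. equilibrium U M H} = {M/x2 - M, M/x1 - M}"
    "stable_eq U (M/x1 - M)" "unstable_eq U (M/x2 - M)"
    using equilibria_of_sign_pattern[OF H_order U_zero U_neg_low U_pos_mid U_neg_high] by auto
qed

definition honest_factor :: "real \<Rightarrow> real \<Rightarrow> real" where
  "honest_factor \<gamma> a = 2*a^3 - 4*a^2 + a + 1 - \<gamma>*a*(1-a)^2"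

definition total_factor :: "real \<Rightarrow> real" where
  "total_factor a = a^3 - 2*a^2 - a + 1"

definition f_reduced :: "real \<Rightarrow> real \<Rightarrow> real" where
  "f_reduced \<gamma> a = a*(1-2*a)*honest_factor \<gamma> a / ((1-a)*total_factor a)"

lemma b_h_eq: "b_h \<gamma> a = (1-2*a) * honest_factor \<gamma> a / (2*a^3 - 4*a^2 + 1)"
proof -
  have "(2*a^4 - 5*a^3 + 4*a^2 - a) * \<gamma> - 4*a^4 + 10*a^3 - 6*a^2 - a + 1
      = (1-2*a) * honest_factor \<gamma> a"
    unfolding honest_factor_def by algebra
  then show ?thesis unfolding b_h_def by simp
qed

lemma b_a_add_b_h: "b_a \<gamma> a + b_h \<gamma> a = total_factor a / (2*a^3 - 4*a^2 + 1)"
proof -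
  have "((-2*a^4 + 5*a^3 - 4*a^2 + a) * \<gamma> + 4*a^4 - 9*a^3 + 4*a^2)
      + ((2*a^4 - 5*a^3 + 4*a^2 - a) * \<gamma> - 4*a^4 + 10*a^3 - 6*a^2 - a + 1) = total_factor a"
    unfolding total_factor_def by algebra
  then show ?thesis unfolding b_a_def b_h_def by (simp add: add_divide_distrib[symmetric])
qed

lemma f_sm_eq_f_reduced:
  assumes "B \<noteq> 0" "2*a^3 - 4*a^2 + 1 \<noteq> 0"
  shows "f_sm B \<gamma> a = f_reduced \<gamma> a"
proof -
  have "f_sm B \<gamma> a = a * b_h \<gamma> a / ((1 - a) * (b_a \<gamma> a + b_h \<gamma> a))"
    using assms(1) by (simp add: f_sm_def B_honest_def B_attacker_def flip: distrib_left)
  also have "\<dots> = f_reduced \<gamma> a"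
    unfolding b_a_add_b_h unfolding b_h_eq f_reduced_def using assms(2) by simp
  finally show ?thesis .
qed

lemma U_S_eq_f_sm:
  assumes "B \<noteq> 0" "0 < M" "M < H"
  shows "U_S B C \<gamma> M H = B / M * f_sm B \<gamma> (M / (H + M)) - C"
proof -
  define \<alpha> where "\<alpha> = M / (H + M)"
  have "H + M = M / \<alpha>" "\<alpha> \<noteq> 0" "\<alpha> \<noteq> 1"
    using assms by (auto simp: \<alpha>_def field_simps)
  with assms show ?thesis
    by (simp add: U_S_def f_sm_def Let_def mult_ac flip: \<alpha>_def)
qed

definition f_numer :: "real \<Rightarrow> real \<Rightarrow> real" where
  "f_numer \<gamma> a = (1 - 2*a - 15*a^2 + 58*a^3 - 68*a^4 + 10*a^5 + 36*a^6 - 24*a^7 + 4*a^8)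
     + \<gamma>*(- 2*a + 14*a^2 - 36*a^3 + 39*a^4 - 8*a^5 - 17*a^6 + 12*a^7 - 2*a^8)"

definition f_numer_slope0 :: "real \<Rightarrow> real" where
  "f_numer_slope0 a = 4 + 68*a - 212*a^2 + 120*a^3 + 140*a^4 - 152*a^5 + 32*a^6"

definition f_numer_slope1 :: "real \<Rightarrow> real" where
  "f_numer_slope1 a = 8 + 20*a - 92*a^2 + 48*a^3 + 76*a^4 - 76*a^5 + 16*a^6"

text \<open>The following positivity proofs rewrite each polynomial in the variables \<open>x = 2a\<close> and
  \<open>y = 1 - 2a\<close>, both nonnegative on \<open>[0, 1/2]\<close>, where all its coefficients are nonnegative.\<close>

lemma denominator_pos:
  assumes "0 \<le> a" "a \<le> 1/2"
  shows "0 < 2*a^3 - 4*a^2 + (1::real)"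
proof -
  define x y where "x = 2*a" and "y = 1 - 2*a"
  have "0 \<le> x" "0 \<le> y" using assms by (simp_all add: x_def y_def)
  have "2*a^3 - 4*a^2 + 1 = 1/4 + 3/4*y^3 + 9/4*x*y^2 + 5/4*x^2*y"
    unfolding x_def y_def by algebra
  also have "\<dots> > 0"
    using \<open>0 \<le> x\<close> \<open>0 \<le> y\<close> by (intro add_pos_nonneg mult_nonneg_nonneg) auto
  finally show ?thesis .
qed

lemma total_factor_pos:
  assumes "0 \<le> a" "a \<le> 1/2"
  shows "0 < total_factor a"
proof -
  define x y where "x = 2*a" and "y = 1 - 2*a"
  have "0 \<le> x" "0 \<le> y" using assms by (simp_all add: x_def y_def)
  have "total_factor a = 1/8 + 7/8*y^3 + 17/8*x*y^2 + 9/8*x^2*y"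
    unfolding total_factor_def x_def y_def by algebra
  also have "\<dots> > 0"
    using \<open>0 \<le> x\<close> \<open>0 \<le> y\<close> by (intro add_pos_nonneg mult_nonneg_nonneg) auto
  finally show ?thesis .
qed

lemma f_numer_slope0_pos:
  assumes "0 \<le> a" "a \<le> 1/2"
  shows "0 < f_numer_slope0 a"
proof -
  define x y where "x = 2*a" and "y = 1 - 2*a"
  have "0 \<le> x" "0 \<le> y" using assms by (simp_all add: x_def y_def)
  have "f_numer_slope0 a
      = 4 + 34*x*y^5 + 117*x^2*y^4 + 143*x^3*y^3 + 303/4*x^4*y^2 + 63/4*x^5*y + 1/2*x^6"
    unfolding f_numer_slope0_def x_def y_def by algebra
  also have "\<dots> > 0"
    using \<open>0 \<le> x\<close> \<open>0 \<le> y\<close> by (intro add_pos_nonneg mult_nonneg_nonneg) auto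
  finally show ?thesis .
qed

lemma f_numer_slope1_pos:
  assumes "0 \<le> a" "a \<le> 1/2"
  shows "0 < f_numer_slope1 a"
proof -
  define x y where "x = 2*a" and "y = 1 - 2*a"
  have "0 \<le> x" "0 \<le> y" using assms by (simp_all add: x_def y_def)
  have "f_numer_slope1 a
      = 29/8 + 35/8*y^6 + 145/4*x*y^5 + 741/8*x^2*y^4 + 203/2*x^3*y^3 + 403/8*x^4*y^2 + 75/8*x^5*y"
    unfolding f_numer_slope1_def x_def y_def by algebra
  also have "\<dots> > 0"
    using \<open>0 \<le> x\<close> \<open>0 \<le> y\<close> by (intro add_pos_nonneg mult_nonneg_nonneg) auto
  finally show ?thesis .
qed

lemma U_S_eq_f_reduced:
  assumes "0 < B" "0 < M" "M < H"
  shows "U_S B C \<gamma> M H = B / M * (f_reduced \<gamma> (M / (H + M)) - C * M / B)"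
proof -
  have "0 \<le> M / (H + M)" "M / (H + M) \<le> 1/2"
    using assms by (auto simp: field_simps)
  then have "f_sm B \<gamma> (M / (H + M)) = f_reduced \<gamma> (M / (H + M))"
    using assms(1) denominator_pos by (intro f_sm_eq_f_reduced) (auto simp: less_le)
  moreover have "B / M * (C * M / B) = C"
    using assms by simp
  ultimately show ?thesis
    using U_S_eq_f_sm[of B M H C \<gamma>] assms by (simp add: right_diff_distrib)
qed

lemma f_reduced_deriv:
  assumes "(1-a) * total_factor a \<noteq> 0"
  shows "(f_reduced \<gamma> has_real_derivative f_numer \<gamma> a / ((1-a) * total_factor a)^2) (at a)"
proof -
  have num: "((\<lambda>a. a*(1-2*a)*honest_factor \<gamma> a) has_real_derivative
      (1 - 4*a)*honest_factor \<gamma> a + a*(1-2*a)*(6*a^2 - 8*a + 1 - \<gamma>*(1-a)*(1-3*a))) (at a)"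
    unfolding honest_factor_def
    by (auto intro!: derivative_eq_intros simp: algebra_simps power2_eq_square)
  have den: "((\<lambda>a. (1-a)*total_factor a) has_real_derivative
      - total_factor a + (1-a)*(3*a^2 - 4*a - 1)) (at a)"
    unfolding total_factor_def
    by (auto intro!: derivative_eq_intros simp: algebra_simps power2_eq_square)
  have "((1 - 4*a)*honest_factor \<gamma> a + a*(1-2*a)*(6*a^2 - 8*a + 1 - \<gamma>*(1-a)*(1-3*a)))
        * ((1-a)*total_factor a)
      - a*(1-2*a)*honest_factor \<gamma> a * (- total_factor a + (1-a)*(3*a^2 - 4*a - 1))
      = f_numer \<gamma> a"
    unfolding honest_factor_def total_factor_def f_numer_def by algebra
  then show ?thesis
    using DERIV_divide[OF num den assms] by (simp add: f_reduced_def[abs_def] power2_eq_square)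
qed

lemma f_numer_deriv:
  "(f_numer \<gamma> has_real_derivative
     (a - 1/2) * ((1-\<gamma>) * f_numer_slope0 a + \<gamma> * f_numer_slope1 a)) (at a)"
proof -
  have "(f_numer \<gamma> has_real_derivative
      (- 2 - 30*a + 174*a^2 - 272*a^3 + 50*a^4 + 216*a^5 - 168*a^6 + 32*a^7)
      + \<gamma>*(- 2 + 28*a - 108*a^2 + 156*a^3 - 40*a^4 - 102*a^5 + 84*a^6 - 16*a^7)) (at a)"
    unfolding f_numer_def[abs_def] by (rule derivative_eq_intros refl | simp)+
  moreover have "(- 2 - 30*a + 174*a^2 - 272*a^3 + 50*a^4 + 216*a^5 - 168*a^6 + 32*a^7)
      + \<gamma>*(- 2 + 28*a - 108*a^2 + 156*a^3 - 40*a^4 - 102*a^5 + 84*a^6 - 16*a^7)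
      = (a - 1/2) * ((1-\<gamma>) * f_numer_slope0 a + \<gamma> * f_numer_slope1 a)"
    unfolding f_numer_slope0_def f_numer_slope1_def by algebra
  ultimately show ?thesis by simp
qed

lemma f_numer_strict_antimono:
  assumes "0 \<le> \<gamma>" "\<gamma> \<le> 1"
  shows "strict_antimono_on {0..1/2} (f_numer \<gamma>)"
proof (rule strict_antimono_on_if_DERIV_neg[OF f_numer_deriv])
  fix a :: real assume a: "0 < a" "a < 1/2"
  have "0 < (1-\<gamma>) * f_numer_slope0 a + \<gamma> * f_numer_slope1 a"
    using assms a f_numer_slope0_pos[of a] f_numer_slope1_pos[of a]
    by (cases "\<gamma> = 0") (auto intro: add_nonneg_pos)
  with a show "(a - 1/2) * ((1-\<gamma>) * f_numer_slope0 a + \<gamma> * f_numer_slope1 a) < 0"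
    by (simp add: mult_neg_pos)
qed

lemma f_reduced_continuous_on: "continuous_on {0..1/2} (f_reduced \<gamma>)"
proof (rule DERIV_atLeastAtMost_imp_continuous_on)
  fix a :: real assume "0 \<le> a" "a \<le> 1/2"
  then have "(1-a) * total_factor a \<noteq> 0"
    using total_factor_pos[of a] by simp
  then show "\<exists>y. DERIV (f_reduced \<gamma>) a :> y"
    by (blast intro: f_reduced_deriv)
qed

lemma f_reduced_unimodal:
  assumes "0 \<le> \<gamma>" "\<gamma> \<le> 1"
  obtains m where "0 < m" "m < 1/2"
    "strict_mono_on {0..m} (f_reduced \<gamma>)" "strict_antimono_on {m..1/2} (f_reduced \<gamma>)"
proof (rule unimodal_if_DERIV_sign_decreasing)
  show "(f_reduced \<gamma> has_real_derivative f_numer \<gamma> a / ((1-a) * total_factor a)^2) (at a)"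
    "0 < ((1-a) * total_factor a)^2" if "0 \<le> a" "a \<le> 1/2" for a
    using total_factor_pos[OF that] that by (auto intro: f_reduced_deriv)
  show "continuous_on {0..1/2} (f_numer \<gamma>)"
    unfolding f_numer_def by (intro continuous_intros)
  show "strict_antimono_on {0..1/2} (f_numer \<gamma>)"
    using assms by (rule f_numer_strict_antimono)
  show "0 < f_numer \<gamma> 0" "f_numer \<gamma> (1/2) < 0"
    using assms by (simp_all add: f_numer_def power_divide)
qed (use that in auto)

lemma M_max_eq_peak:
  assumes "0 < B" "0 \<le> m" "m \<le> 1/2"
    and "strict_mono_on {0..m} (f_reduced \<gamma>)" "strict_antimono_on {m..1/2} (f_reduced \<gamma>)"
  shows "M_max B C \<gamma> = B / C * f_reduced \<gamma> m"
proof -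
  have "f_sm B \<gamma> ` {0..1/2} = f_reduced \<gamma> ` {0..1/2}"
    using assms(1) denominator_pos by (intro image_cong) (auto intro!: f_sm_eq_f_reduced simp: less_le)
  moreover have "Sup (f_reduced \<gamma> ` {0..1/2}) = f_reduced \<gamma> m"
    using assms unimodal_le_peak[OF assms(4,5)] by (intro cSup_eq_maximum) auto
  ultimately show ?thesis by (simp add: M_max_def)
qed

theorem proposition1:
  fixes B C \<gamma> M :: real
  assumes "B > 0" and "C > 0" and "0 \<le> \<gamma>" and "\<gamma> \<le> 1"
    and "0 < M" and "M < M_max B C \<gamma>"
  shows "\<exists>H1 H2. H1 < H2
           \<and> {H. equilibrium (U_S B C \<gamma> M) M H} = {H1, H2}
           \<and> stable_eq (U_S B C \<gamma> M) H2
           \<and> unstable_eq (U_S B C \<gamma> M) H1"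
proof -
  obtain m where m: "0 < m" "m < 1/2"
    and inc: "strict_mono_on {0..m} (f_reduced \<gamma>)" and dec: "strict_antimono_on {m..1/2} (f_reduced \<gamma>)"
    using f_reduced_unimodal assms(3,4) by blast
  have peak: "C * M / B < f_reduced \<gamma> m"
    using assms(1,2,6) M_max_eq_peak[OF assms(1) _ _ inc dec] m by (simp add: field_simps)
  have ends: "f_reduced \<gamma> 0 < C * M / B" "f_reduced \<gamma> (1/2) < C * M / B"
    using assms by (simp_all add: f_reduced_def)
  obtain x1 x2 where x: "0 < x1" "x1 < x2" "x2 < 1/2"
      "f_reduced \<gamma> x1 = C * M / B" "f_reduced \<gamma> x2 = C * M / B"
    and mid: "\<And>x. x1 < x \<Longrightarrow> x < x2 \<Longrightarrow> C * M / B < f_reduced \<gamma> x"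
    and low: "\<And>x. 0 \<le> x \<Longrightarrow> x < x1 \<Longrightarrow> f_reduced \<gamma> x < C * M / B"
    and high: "\<And>x. x2 < x \<Longrightarrow> x \<le> 1/2 \<Longrightarrow> f_reduced \<gamma> x < C * M / B"
    by (rule unimodal_level_set[OF f_reduced_continuous_on less_imp_le[OF m(1)] less_imp_le[OF m(2)]
          inc dec ends peak]) (rule that)
  have "0 < B / M" using assms(1,5) by simp
  note equilibria = equilibria_of_share_sign_pattern[OF assms(5) this U_S_eq_f_reduced[OF assms(1,5)]
      x mid low[OF less_imp_le] high[OF _ less_imp_le]]
  have "M/x2 - M < M/x1 - M"
    using x assms(5) by (simp add: field_simps)
  with equilibria show ?thesis by blast
qed

end
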